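(* Strong coherence does not satisfy directionality. That is, there exist an SBAF $\mathcal{SB}=\langle\mathcal{L},A,\to,\text{supp}\rangle$, a set $U\subseteq A$ and a set $E\subseteq U$ with the following properties: (i) no argument of $A\setminus U$ attacks an argument of $U$, and no argument $b\in U$ is supported by $A\setminus U$ (i.e. $Prem(b)\not\subseteq Sent(A\setminus U)$ for all $b\in U$); (ii) $E$ is strongly coherent in the restricted SBAF $\mathcal{SB}_{|U}$; (iii) there is no strongly coherent extension $E'\subseteq A$ of $\mathcal{SB}$ with $E=E'\cap U$.
   Context: A language is a triple $\mathcal{L}=\langle L,\overline{\cdot},n\rangle$: $L$ is a nonempty set of sentences; $\overline{\cdot}$ assigns to each $s\in L$ a set $\overline{s}\subseteq L$ of sentences incompatible with $s$, and is symmetric ($s\in\overline{t}\iff t\in\overline{s}$); $n$ is a partial naming function assigning to an argument $a$ a sentence $n(a)\in L$ (if $n(a)$ is undefined, put $\overline{n(a)}:=\emptyset$), and $\overline{n(\langle\{t\},t\rangle)}=\emptyset$ for all $t\in L$. An argument is a pair $a=\langle Prem(a),Conc(a)\rangle$ with $Prem(a)$ a nonempty finite subset of $L$ and $Conc(a)\in L$; $Sent(a):=Prem(a)\cup\{Conc(a)\}$ and $Sent(E):=\bigcup_{a\in E}Sent(a)$. The minimal argument for $s$ is $\langle\{s\},s\rangle$. A set $E$ of arguments supports an argument $a$ if $Prem(a)\subseteq Sent(E)$; $E$ contains undercutting information for $a$ if $\overline{n(a)}\cap Sent(E)\neq\emptyset$. Argument $a$ attacks $b$ ($a\to b$) if $Conc(a)\in\overline{s}$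 for some $s\in Sent(b)$ or $Conc(a)\in\overline{n(b)}$. An SBAF is $\mathcal{SB}=\langle\mathcal{L},A,\to,\text{supp}\rangle$ with $A$ a finite set of arguments in $\mathcal L$ and attack and support as just defined. For $E\subseteq A$: $E\to b$ if some $a\in E$ attacks $b$; $E$ defends $a\in A$ if $E\to b$ for every $b\in A$ with $b\to a$; $E$ is conflict-free if there are no $a,b\in E$ with $a\to b$; $E$ is admissible if it is conflict-free and defends each of its elements. $E\subseteq A$ is strongly coherent if it is admissible and for every $a\in A$: if $E$ supports $a$ and $E$ contains no undercutting information for $a$, then $a\in E$. For $U\subseteq A$, $\mathcal{SB}_{|U}=\langle\mathcal{L},U,\to\cap(U\times U),\text{supp restricted to }U\rangle$ is the SBAF with argument set $U$; all notions (defence, admissibility, coherence) in $\mathcal{SB}_{|U}$ are computed with $U$ in place of $A$. *)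

theory Defs
  imports Main
begin

type_synonym 's argument = "'s set \<times> 's"

definition Prem :: "'s argument \<Rightarrow> 's set" where "Prem a = fst a"
definition Conc :: "'s argument \<Rightarrow> 's" where "Conc a = snd a"
definition Sent :: "'s argument \<Rightarrow> 's set" where "Sent a = Prem a \<union> {Conc a}"
definition SentS :: "'s argument set \<Rightarrow> 's set" where "SentS E = (\<Union>a\<in>E. Sent a)"

definition ncontr :: "('s \<Rightarrow> 's set) \<Rightarrow> ('s argument \<Rightarrow> 's option) \<Rightarrow> 's argument \<Rightarrow> 's set" where
  "ncontr contr nm a = (case nm a of None \<Rightarrow> {} | Some s \<Rightarrow> contr s)"

definition is_language :: "'s set \<Rightarrow> ('s \<Rightarrow> 's set) \<Rightarrow> ('s argument \<Rightarrow> 's option) \<Rightarrow> bool" where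
  "is_language L contr nm \<longleftrightarrow>
     L \<noteq> {} \<and>
     (\<forall>s\<in>L. contr s \<subseteq> L) \<and>
     (\<forall>s\<in>L. \<forall>t\<in>L. s \<in> contr t \<longleftrightarrow> t \<in> contr s) \<and>
     (\<forall>a s. nm a = Some s \<longrightarrow> s \<in> L) \<and>
     (\<forall>t. ncontr contr nm ({t}, t) = {})"

definition is_argument :: "'s set \<Rightarrow> 's argument \<Rightarrow> bool" where
  "is_argument L a \<longleftrightarrow> Prem a \<noteq> {} \<and> finite (Prem a) \<and> Prem a \<subseteq> L \<and> Conc a \<in> L"

text \<open>An SBAF over the language is determined by its finite set of arguments.\<close>
definition is_SBAF :: "'s set \<Rightarrow> ('s \<Rightarrow> 's set) \<Rightarrow> ('s argument \<Rightarrow> 's option) \<Rightarrow> 's argument set \<Rightarrow> bool" where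
  "is_SBAF L contr nm A \<longleftrightarrow> is_language L contr nm \<and> finite A \<and> (\<forall>a\<in>A. is_argument L a)"

definition attacks :: "('s \<Rightarrow> 's set) \<Rightarrow> ('s argument \<Rightarrow> 's option) \<Rightarrow> 's argument \<Rightarrow> 's argument \<Rightarrow> bool" where
  "attacks contr nm a b \<longleftrightarrow> (\<exists>s\<in>Sent b. Conc a \<in> contr s) \<or> Conc a \<in> ncontr contr nm b"

definition supports :: "'s argument set \<Rightarrow> 's argument \<Rightarrow> bool" where
  "supports E a \<longleftrightarrow> Prem a \<subseteq> SentS E"

definition undercut_info :: "('s \<Rightarrow> 's set) \<Rightarrow> ('s argument \<Rightarrow> 's option) \<Rightarrow> 's argument set \<Rightarrow> 's argument \<Rightarrow> bool" where
  "undercut_info contr nm E a \<longleftrightarrow> ncontr contr nm a \<inter> SentS E \<noteq> {}"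

definition set_attacks :: "('s \<Rightarrow> 's set) \<Rightarrow> ('s argument \<Rightarrow> 's option) \<Rightarrow> 's argument set \<Rightarrow> 's argument \<Rightarrow> bool" where
  "set_attacks contr nm E b \<longleftrightarrow> (\<exists>a\<in>E. attacks contr nm a b)"

text \<open>Notions relative to the argument set A of the (possibly restricted) SBAF.\<close>
definition defends :: "('s \<Rightarrow> 's set) \<Rightarrow> ('s argument \<Rightarrow> 's option) \<Rightarrow> 's argument set \<Rightarrow> 's argument set \<Rightarrow> 's argument \<Rightarrow> bool" where
  "defends contr nm A E a \<longleftrightarrow> (\<forall>b\<in>A. attacks contr nm b a \<longrightarrow> set_attacks contr nm E b)"

definition conflict_free :: "('s \<Rightarrow> 's set) \<Rightarrow> ('s argument \<Rightarrow> 's option) \<Rightarrow> 's argument set \<Rightarrow> bool" where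
  "conflict_free contr nm E \<longleftrightarrow> \<not> (\<exists>a\<in>E. \<exists>b\<in>E. attacks contr nm a b)"

definition admissible :: "('s \<Rightarrow> 's set) \<Rightarrow> ('s argument \<Rightarrow> 's option) \<Rightarrow> 's argument set \<Rightarrow> 's argument set \<Rightarrow> bool" where
  "admissible contr nm A E \<longleftrightarrow> E \<subseteq> A \<and> conflict_free contr nm E \<and> (\<forall>a\<in>E. defends contr nm A E a)"

definition strongly_coherent :: "('s \<Rightarrow> 's set) \<Rightarrow> ('s argument \<Rightarrow> 's option) \<Rightarrow> 's argument set \<Rightarrow> 's argument set \<Rightarrow> bool" where
  "strongly_coherent contr nm A E \<longleftrightarrow> admissible contr nm A E \<and>
     (\<forall>a\<in>A. supports E a \<and> \<not> undercut_info contr nm E a \<longrightarrow> a \<in> E)"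

end

theory Submission
  imports Defs
begin

text \<open>
  Take arguments \<open>a = \<langle>{1}, 6\<rangle>\<close>, \<open>c = \<langle>{6}, 3\<rangle>\<close> and the minimal argument \<open>d = \<langle>{2}, 2\<rangle>\<close>,
  where \<open>c\<close> is named \<open>5\<close> and \<open>2\<close>, \<open>5\<close> are incompatible. Then \<open>d\<close> undercuts \<open>c\<close> and is itself
  unattacked, while \<open>a\<close> supports \<open>c\<close>. On \<open>U = {a, d}\<close> the set \<open>{a}\<close> is strongly coherent.
  In the full framework, an extension \<open>E'\<close> with \<open>E' \<inter> U = {a}\<close> supports \<open>c\<close> without
  undercutting information (it lacks \<open>d\<close>), so closure forces \<open>c \<in> E'\<close>; but nothing can
  defend \<open>c\<close> against the unattacked \<open>d\<close>, contradicting admissibility.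
\<close>

lemma admissible_excludes_target_of_unattacked:
  assumes "admissible contr nm A E" "d \<in> A" "attacks contr nm d c"
    and "\<forall>x\<in>E. \<not> attacks contr nm x d"
  shows "c \<notin> E"
  using assms unfolding admissible_def defends_def set_attacks_def by blast

lemma supports_if_Prem_subset_Sent:
  assumes "a \<in> E" "Prem c \<subseteq> Sent a"
  shows "supports E c"
  using assms by (auto simp: supports_def SentS_def)

definition ex_contr :: "nat \<Rightarrow> nat set" where
  "ex_contr s = (if s = 2 then {5} else if s = 5 then {2} else {})"

definition ex_a :: "nat argument" where "ex_a = ({1}, 6)"
definition ex_c :: "nat argument" where "ex_c = ({6}, 3)"
definition ex_d :: "nat argument" where "ex_d = ({2}, 2)"

definition ex_nm :: "nat argument \<Rightarrow> nat option" where
  "ex_nm x = (if x = ex_c then Some 5 else None)"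

definition ex_A :: "nat argument set" where "ex_A = {ex_a, ex_c, ex_d}"
definition ex_U :: "nat argument set" where "ex_U = {ex_a, ex_d}"

lemmas ex_args_defs = ex_a_def ex_c_def ex_d_def Prem_def Conc_def Sent_def

lemma ex_args_distinct: "ex_a \<noteq> ex_c" "ex_a \<noteq> ex_d" "ex_c \<noteq> ex_d"
  by (simp_all add: ex_a_def ex_c_def ex_d_def)

lemma ex_ncontr: "ncontr ex_contr ex_nm x = (if x = ex_c then {2} else {})"
  by (simp add: ncontr_def ex_nm_def ex_contr_def)

lemma ex_attacks_iff:
  assumes "x \<in> ex_A" "y \<in> ex_A"
  shows "attacks ex_contr ex_nm x y \<longleftrightarrow> x = ex_d \<and> y = ex_c"
proof -
  have "x = ex_a \<or> x = ex_c \<or> x = ex_d" "y = ex_a \<or> y = ex_c \<or> y = ex_d"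
    using assms by (auto simp: ex_A_def)
  then show ?thesis
    unfolding attacks_def ex_ncontr
    by (elim disjE) (simp_all add: ex_args_defs ex_contr_def)
qed

lemma ex_is_SBAF: "is_SBAF {1, 2, 3, 5, 6} ex_contr ex_nm ex_A"
proof -
  have "is_language {1, 2, 3, 5, 6} ex_contr ex_nm"
    by (auto simp: is_language_def ex_contr_def ex_nm_def ncontr_def ex_c_def)
  then show ?thesis
    by (auto simp: is_SBAF_def ex_A_def is_argument_def ex_args_defs)
qed

lemma ex_outside_not_attacks_U: "\<forall>x\<in>ex_A - ex_U. \<forall>b\<in>ex_U. \<not> attacks ex_contr ex_nm x b"
  using ex_attacks_iff ex_args_distinct unfolding ex_U_def ex_A_def by blast

lemma ex_outside_not_supports_U: "\<forall>b\<in>ex_U. \<not> supports (ex_A - ex_U) b"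
proof -
  have "ex_A - ex_U = {ex_c}"
    using ex_args_distinct by (auto simp: ex_A_def ex_U_def)
  then show ?thesis
    by (simp add: ex_U_def supports_def SentS_def ex_args_defs)
qed

lemma ex_strongly_coherent_on_U: "strongly_coherent ex_contr ex_nm ex_U {ex_a}"
proof -
  have "ex_U \<subseteq> ex_A"
    by (auto simp: ex_U_def ex_A_def)
  then have "\<forall>x\<in>ex_U. \<forall>y\<in>ex_U. \<not> attacks ex_contr ex_nm x y"
    using ex_attacks_iff ex_args_distinct by (auto simp: ex_U_def)
  moreover have "\<not> supports {ex_a} ex_d"
    by (simp add: supports_def SentS_def ex_args_defs)
  ultimately show ?thesis
    by (auto simp: strongly_coherent_def admissible_def conflict_free_def defends_def ex_U_def)
qed

lemma ex_no_strongly_coherent_extension: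
  "\<not> (\<exists>E'. E' \<subseteq> ex_A \<and> strongly_coherent ex_contr ex_nm ex_A E' \<and> {ex_a} = E' \<inter> ex_U)"
proof
  assume "\<exists>E'. E' \<subseteq> ex_A \<and> strongly_coherent ex_contr ex_nm ex_A E' \<and> {ex_a} = E' \<inter> ex_U"
  then obtain E' where E'_sub: "E' \<subseteq> ex_A" and sc: "strongly_coherent ex_contr ex_nm ex_A E'"
    and trace: "{ex_a} = E' \<inter> ex_U"
    by blast
  have a_in: "ex_a \<in> E'" and d_notin: "ex_d \<notin> E'"
    using trace ex_args_distinct unfolding ex_U_def by (blast, metis IntI insertCI singletonD)
  have E'_sub_ac: "E' \<subseteq> {ex_a, ex_c}"
    using E'_sub d_notin by (auto simp: ex_A_def)
  have c_A: "ex_c \<in> ex_A" and d_A: "ex_d \<in> ex_A"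
    by (simp_all add: ex_A_def)
  have "supports E' ex_c"
    using a_in by (rule supports_if_Prem_subset_Sent) (simp add: ex_args_defs)
  moreover have "\<not> undercut_info ex_contr ex_nm E' ex_c"
    using E'_sub_ac by (auto simp: undercut_info_def ex_ncontr SentS_def ex_args_defs)
  ultimately have "ex_c \<in> E'"
    using sc c_A by (simp add: strongly_coherent_def)
  moreover have "ex_c \<notin> E'"
  proof (rule admissible_excludes_target_of_unattacked)
    show "ex_d \<in> ex_A"
      by (rule d_A)
    show "admissible ex_contr ex_nm ex_A E'"
      using sc by (simp add: strongly_coherent_def)
    show "attacks ex_contr ex_nm ex_d ex_c"
      using ex_attacks_iff[OF d_A c_A] by simp
    show "\<forall>x\<in>E'. \<not> attacks ex_contr ex_nm x ex_d"
      using E'_sub ex_attacks_iff[OF _ d_A] ex_args_distinct by auto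
  qed
  ultimately show False
    by contradiction
qed

theorem mainTheorem1:
  shows "\<exists>(L :: nat set) contr nm A U E.
    is_SBAF L contr nm A \<and> U \<subseteq> A \<and> E \<subseteq> U \<and>
    (\<forall>a\<in>A - U. \<forall>b\<in>U. \<not> attacks contr nm a b) \<and>
    (\<forall>b\<in>U. \<not> supports (A - U) b) \<and>
    strongly_coherent contr nm U E \<and>
    \<not> (\<exists>E'. E' \<subseteq> A \<and> strongly_coherent contr nm A E' \<and> E = E' \<inter> U)"
proof -
  have "ex_U \<subseteq> ex_A" "{ex_a} \<subseteq> ex_U"
    by (auto simp: ex_U_def ex_A_def)
  then show ?thesis
    using ex_is_SBAF ex_outside_not_attacks_U ex_outside_not_supports_U
      ex_strongly_coherent_on_U ex_no_strongly_coherent_extension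
    by blast
qed

end
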